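(* Let $d=4$ and $G=\{(1),(12)(34),(13)(24),(14)(23)\}\le S_4$. Then $Aut_0(T_{4;G})\cong S_3\times S_6$. More precisely: $T_{(4;G)}$ and $T_{(3,1);G}$ are singletons; $T_{(2^2);G}$ and $T_{(2,1^2);G}$ each have three elements; $T_{(1^4);G}$ has six elements; every element of $Aut_0(T_{4;G})$ permutes the three elements of $T_{(2^2);G}$ and correspondingly the three elements of $T_{(2,1^2);G}$ (each $(2^2)$-orbit lying above exactly one $(2,1^2)$-orbit), and the $S_3$ factor consists of these simultaneous permutations, while the $S_6$ factor consists of all permutations of the six elements of $T_{(1^4);G}$.
   Context: For $\lambda=(\lambda_1\ge\dots\ge\lambda_k>0)$ a partition of $d$, a tabloid of shape $\lambda$ is a sequence $A=(A_1,\dots,A_k)$ of pairwise disjoint subsets of $\{1,\dots,d\}$ with $|A_i|=\lambda_i$; $T_\lambda$ is their set and $T_d$ the union over all partitions. $S_d$ acts by $\zeta A=(\zeta(A_1),\dots,\zeta(A_k))$. $T_d$ is partially ordered by: $A\le B$ iff $A_1\cup\dots\cup A_i\subseteq B_1\cup\dots\cup B_i$ for all $i\ge1$ (missing rows taken empty). For $G\le S_d$, $T_{\lambda;G}$ is the set of $G$-orbits in $T_\lambda$, $T_{d;G}$ the set of all $G$-orbits in $T_d$, partially ordered by $a\le b$ iff there are $A\in a$, $B\in b$ with $A\le B$. $Aut_0(T_{d;G})$ is the group of bijections $\alpha$ of $T_{d;G}$ with $\alpha(a)\le\alpha(b)\iff a\le b$ and $\alpha(T_{\mu;G})=T_{\mu;G}$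 for every partition $\mu$ of $d$. *)

theory Defs
  imports "HOL-Algebra.Sym_Groups" "HOL-Algebra.Bij" "HOL-Combinatorics.Transposition"
begin

definition partitions :: "nat \<Rightarrow> nat list set" where
  "partitions d = {lam. sorted_wrt (\<ge>) lam \<and> (\<forall>x\<in>set lam. 0 < x) \<and> sum_list lam = d}"

definition tabloids :: "nat \<Rightarrow> nat list \<Rightarrow> nat set list set" where
  "tabloids d lam = {A. length A = length lam
      \<and> (\<forall>i<length A. A ! i \<subseteq> {1..d} \<and> card (A ! i) = lam ! i)
      \<and> (\<forall>i<length A. \<forall>j<length A. i \<noteq> j \<longrightarrow> A ! i \<inter> A ! j = {})}"

definition tab_act :: "(nat \<Rightarrow> nat) \<Rightarrow> nat set list \<Rightarrow> nat set list" where
  "tab_act z A = map ((`) z) A"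

text \<open>Dominance order: A <= B iff A_1 u..u A_i is contained in B_1 u..u B_i for all i >= 1
  (missing rows are empty; take i beyond the length yields the whole list).\<close>
definition tab_le :: "nat set list \<Rightarrow> nat set list \<Rightarrow> bool" where
  "tab_le A B \<longleftrightarrow> (\<forall>i\<ge>1. \<Union>(set (take i A)) \<subseteq> \<Union>(set (take i B)))"

definition tab_orbit :: "(nat \<Rightarrow> nat) set \<Rightarrow> nat set list \<Rightarrow> nat set list set" where
  "tab_orbit G A = (\<lambda>g. tab_act g A) ` G"

definition orbits_shape :: "nat \<Rightarrow> (nat \<Rightarrow> nat) set \<Rightarrow> nat list \<Rightarrow> nat set list set set" where
  "orbits_shape d G lam = tab_orbit G ` tabloids d lam"

definition orbits :: "nat \<Rightarrow> (nat \<Rightarrow> nat) set \<Rightarrow> nat set list set set" where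
  "orbits d G = (\<Union>lam\<in>partitions d. orbits_shape d G lam)"

definition orbit_le :: "nat set list set \<Rightarrow> nat set list set \<Rightarrow> bool" where
  "orbit_le a b \<longleftrightarrow> (\<exists>A\<in>a. \<exists>B\<in>b. tab_le A B)"

definition Aut0_set :: "nat \<Rightarrow> (nat \<Rightarrow> nat) set \<Rightarrow> (nat set list set \<Rightarrow> nat set list set) set" where
  "Aut0_set d G = {\<alpha> \<in> Bij (orbits d G).
      (\<forall>a\<in>orbits d G. \<forall>b\<in>orbits d G. orbit_le (\<alpha> a) (\<alpha> b) \<longleftrightarrow> orbit_le a b)
      \<and> (\<forall>mu\<in>partitions d. \<alpha> ` orbits_shape d G mu = orbits_shape d G mu)}"

definition Aut0 :: "nat \<Rightarrow> (nat \<Rightarrow> nat) set \<Rightarrow> (nat set list set \<Rightarrow> nat set list set) monoid" where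
  "Aut0 d G = (BijGroup (orbits d G))\<lparr>carrier := Aut0_set d G\<rparr>"

definition Klein4 :: "(nat \<Rightarrow> nat) set" where
  "Klein4 = {id, transpose 1 2 \<circ> transpose 3 4, transpose 1 3 \<circ> transpose 2 4,
             transpose 1 4 \<circ> transpose 2 3}"

end

theory Submission
  imports Defs
begin

text \<open>
  The Klein four-group acts simply transitively on \<open>{1,...,4}\<close>, so the tabloid orbits are
  easily listed by representatives: one orbit each of shapes \<open>(4)\<close> and \<open>(3,1)\<close>, three each of
  shapes \<open>(2,2)\<close> and \<open>(2,1,1)\<close>, and six of shape \<open>(1,1,1,1)\<close>. Comparing representatives shows
  that the dominance order on orbits is rigidly layered: the \<open>(4)\<close>- and \<open>(3,1)\<close>-orbits lie above
  everything, orbits of equal shape are incomparable, every \<open>(1,1,1,1)\<close>-orbit lies below every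
  \<open>(2,2)\<close>- and \<open>(2,1,1)\<close>-orbit, and each \<open>(2,1,1)\<close>-orbit lies below exactly one \<open>(2,2)\<close>-orbit,
  namely the one obtained by merging its last two rows. A shape-preserving order automorphism is
  therefore an arbitrary permutation of the six \<open>(1,1,1,1)\<close>-orbits together with an arbitrary
  permutation of the three \<open>(2,2)\<close>-orbits, the latter dictating the action on the
  \<open>(2,1,1)\<close>-orbits.
\<close>

section \<open>Tabloids under a group of transformations\<close>

lemma tab_act_id [simp]: "tab_act id A = A"
  by (simp add: tab_act_def)

lemma tab_act_comp: "tab_act g (tab_act h A) = tab_act (g \<circ> h) A"
  by (simp add: tab_act_def image_comp)

lemma Union_set_take_tab_act: "\<Union>(set (take i (tab_act g A))) = g ` \<Union>(set (take i A))"
  by (simp add: tab_act_def take_map image_Union)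

lemma tab_le_tab_act_iff: "inj g \<Longrightarrow> tab_le (tab_act g A) (tab_act g B) \<longleftrightarrow> tab_le A B"
  by (simp add: tab_le_def Union_set_take_tab_act inj_image_subset_iff)

lemma tab_le_iff_prefixes_upto:
  assumes "length A \<le> n" and "length B \<le> n"
  shows "tab_le A B \<longleftrightarrow> (\<forall>i\<in>{1..n}. \<Union>(set (take i A)) \<subseteq> \<Union>(set (take i B)))"
  unfolding tab_le_def
proof (intro iffI allI impI ballI)
  fix i :: nat
  assume bounded: "\<forall>i\<in>{1..n}. \<Union>(set (take i A)) \<subseteq> \<Union>(set (take i B))" and "1 \<le> i"
  show "\<Union>(set (take i A)) \<subseteq> \<Union>(set (take i B))"
  proof (cases "i \<le> n")
    case True
    with bounded \<open>1 \<le> i\<close> show ?thesis by simp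
  next
    case False
    with assms have "take i A = take n A" "take i B = take n B" by simp_all
    with bounded[rule_format, of n] assms show ?thesis by (cases "n = 0") auto
  qed
qed auto

locale transformation_group =
  fixes G :: "(nat \<Rightarrow> nat) set"
  assumes id_mem: "id \<in> G"
    and comp_mem: "g \<in> G \<Longrightarrow> h \<in> G \<Longrightarrow> g \<circ> h \<in> G"
    and left_inverse_ex: "g \<in> G \<Longrightarrow> \<exists>h\<in>G. h \<circ> g = id"
begin

lemma inj_mem: "g \<in> G \<Longrightarrow> inj g"
  using left_inverse_ex by (metis inj_on_id inj_on_imageI2)

lemma self_mem_tab_orbit: "A \<in> tab_orbit G A"
  using id_mem by (force simp: tab_orbit_def)

lemma tab_orbit_subset: "A \<in> tab_orbit G B \<Longrightarrow> tab_orbit G A \<subseteq> tab_orbit G B"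
  using comp_mem by (auto simp: tab_orbit_def tab_act_comp)

lemma tab_orbit_eq:
  assumes "A \<in> tab_orbit G B"
  shows "tab_orbit G A = tab_orbit G B"
proof -
  obtain g where g: "g \<in> G" "A = tab_act g B"
    using assms by (auto simp: tab_orbit_def)
  obtain h where h: "h \<in> G" "h \<circ> g = id"
    using left_inverse_ex[OF g(1)] by blast
  have "B \<in> tab_orbit G A"
    using g h by (auto simp: tab_orbit_def tab_act_comp intro!: image_eqI[of _ _ h])
  with assms show ?thesis
    by (simp add: tab_orbit_subset subset_antisym)
qed

lemma orbit_le_tab_orbit_iff:
  "orbit_le (tab_orbit G A) (tab_orbit G B) \<longleftrightarrow> (\<exists>g\<in>G. tab_le A (tab_act g B))"
proof
  assume "orbit_le (tab_orbit G A) (tab_orbit G B)"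
  then obtain f g where fg: "f \<in> G" "g \<in> G" "tab_le (tab_act f A) (tab_act g B)"
    by (auto simp: orbit_le_def tab_orbit_def)
  obtain h where h: "h \<in> G" "h \<circ> f = id"
    using left_inverse_ex[OF fg(1)] by blast
  have "tab_le (tab_act h (tab_act f A)) (tab_act h (tab_act g B))"
    using fg(3) tab_le_tab_act_iff[OF inj_mem[OF h(1)]] by blast
  then have "tab_le A (tab_act (h \<circ> g) B)"
    by (simp add: tab_act_comp h(2))
  with comp_mem[OF h(1) fg(2)] show "\<exists>g\<in>G. tab_le A (tab_act g B)" by blast
next
  assume "\<exists>g\<in>G. tab_le A (tab_act g B)"
  then obtain g where "g \<in> G" "tab_le A (tab_act g B)"
    by blast
  moreover from \<open>g \<in> G\<close> have "tab_act g B \<in> tab_orbit G B"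
    by (simp add: tab_orbit_def)
  ultimately show "orbit_le (tab_orbit G A) (tab_orbit G B)"
    using self_mem_tab_orbit unfolding orbit_le_def by blast
qed

lemma orbits_shape_eq_image:
  assumes "Rs \<subseteq> tabloids d lam"
    and "\<And>A. A \<in> tabloids d lam \<Longrightarrow> \<exists>R\<in>Rs. A \<in> tab_orbit G R"
  shows "orbits_shape d G lam = tab_orbit G ` Rs"
proof
  show "orbits_shape d G lam \<subseteq> tab_orbit G ` Rs"
    using assms(2) tab_orbit_eq by (force simp: orbits_shape_def)
  show "tab_orbit G ` Rs \<subseteq> orbits_shape d G lam"
    using assms(1) by (auto simp: orbits_shape_def)
qed

end

definition merge_tail_rows :: "nat set list \<Rightarrow> nat set list" where
  "merge_tail_rows A = take 1 A @ [\<Union>(set (drop 1 A))]"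

lemma merge_tail_rows_tab_act: "merge_tail_rows (tab_act g A) = tab_act g (merge_tail_rows A)"
  by (simp add: merge_tail_rows_def tab_act_def take_map drop_map image_Union)

lemma image_merge_tail_rows_tab_orbit:
  "merge_tail_rows ` tab_orbit G A = tab_orbit G (merge_tail_rows A)"
  by (simp add: tab_orbit_def image_image merge_tail_rows_tab_act)

lemma tabloids_Nil: "tabloids d [] = {[]}"
  by (auto simp: tabloids_def)

lemma Cons_mem_tabloids_iff:
  "S # B \<in> tabloids d (k # lam) \<longleftrightarrow>
     S \<subseteq> {1..d} \<and> card S = k \<and> S \<inter> \<Union>(set B) = {} \<and> B \<in> tabloids d lam"
proof -
  let ?disjoint = "\<lambda>A. \<forall>i<length A. \<forall>j<length A. i \<noteq> j \<longrightarrow> A ! i \<inter> A ! j = {}"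
  have "S \<inter> \<Union>(set B) = {} \<longleftrightarrow> (\<forall>j<length B. S \<inter> B ! j = {})"
    by (auto simp: set_conv_nth)
  then have "?disjoint (S # B) \<longleftrightarrow> S \<inter> \<Union>(set B) = {} \<and> ?disjoint B"
    unfolding length_Cons All_less_Suc2 by (simp add: Int_commute imp_conjR all_conj_distrib)
  then show ?thesis
    unfolding tabloids_def by (auto simp: All_less_Suc2)
qed

lemma tabloids_Cons:
  "tabloids d (k # lam) =
     {S # B |S B. S \<subseteq> {1..d} \<and> card S = k \<and> S \<inter> \<Union>(set B) = {} \<and> B \<in> tabloids d lam}"
proof (rule Set.set_eqI, rule iffI)
  fix A assume A: "A \<in> tabloids d (k # lam)"
  then obtain S B where "A = S # B"
    by (cases A) (auto simp: tabloids_def)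
  with A show "A \<in> {S # B |S B. S \<subseteq> {1..d} \<and> card S = k \<and> S \<inter> \<Union>(set B) = {} \<and> B \<in> tabloids d lam}"
    by (simp add: Cons_mem_tabloids_iff)
qed (auto simp: Cons_mem_tabloids_iff)

section \<open>Bijection groups\<close>

lemma Bij_mem: "f \<in> Bij S \<Longrightarrow> x \<in> S \<Longrightarrow> f x \<in> S"
  by (meson Bij_imp_funcset funcset_mem)

lemma restrict_mem_Bij:
  assumes "\<alpha> \<in> Bij X" "S \<subseteq> X" "\<alpha> ` S = S"
  shows "restrict \<alpha> S \<in> Bij S"
  using assms by (auto simp: Bij_def bij_betw_def intro: inj_on_subset)

lemma restrict_compose:
  assumes "S \<subseteq> X" "\<beta> ` S \<subseteq> S"
  shows "restrict (compose X \<alpha> \<beta>) S = compose S (restrict \<alpha> S) (restrict \<beta> S)"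
  using assms by (auto simp: compose_def fun_eq_iff)

lemma BijGroup_iso_BijGroup:
  assumes h: "bij_betw h S T"
  shows "BijGroup S \<cong> BijGroup T"
proof -
  define h' where "h' = inv_into S h"
  have h': "bij_betw h' T S"
    using h unfolding h'_def by (rule bij_betw_inv_into)
  have h'_h: "h' (h x) = x" if "x \<in> S" for x
    using h that unfolding h'_def by (simp add: bij_betw_inv_into_left)
  have h_h': "h (h' y) = y" if "y \<in> T" for y
    using h that unfolding h'_def by (simp add: bij_betw_inv_into_right)
  have h_mem: "h x \<in> T" if "x \<in> S" for x
    using h that by (meson bij_betwE)
  have h'_mem: "h' y \<in> S" if "y \<in> T" for y
    using h' that by (meson bij_betwE)
  define \<phi> where "\<phi> f = restrict (h \<circ> f \<circ> h') T" for f
  define \<psi> where "\<psi> g = restrict (h' \<circ> g \<circ> h) S" for g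
  have "bij_betw \<phi> (Bij S) (Bij T)"
  proof (rule bij_betw_byWitness[where f' = \<psi>])
    show "\<forall>f\<in>Bij S. \<psi> (\<phi> f) = f"
    proof (intro ballI ext)
      fix f x assume f: "f \<in> Bij S"
      show "\<psi> (\<phi> f) x = f x"
        using f h_mem h'_h Bij_mem[OF f]
        by (cases "x \<in> S") (simp_all add: \<phi>_def \<psi>_def Bij_def extensional_def)
    qed
    show "\<forall>g\<in>Bij T. \<phi> (\<psi> g) = g"
    proof (intro ballI ext)
      fix g y assume g: "g \<in> Bij T"
      show "\<phi> (\<psi> g) y = g y"
        using g h'_mem h_h' Bij_mem[OF g]
        by (cases "y \<in> T") (simp_all add: \<phi>_def \<psi>_def Bij_def extensional_def)
    qed
    have "bij_betw (h \<circ> f \<circ> h') T T" if "bij_betw f S S" for f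
      using bij_betw_trans[OF h' bij_betw_trans[OF that h]] by (simp add: comp_assoc)
    then show "\<phi> ` Bij S \<subseteq> Bij T"
      by (auto simp: \<phi>_def Bij_def)
    have "bij_betw (h' \<circ> g \<circ> h) S S" if "bij_betw g T T" for g
      using bij_betw_trans[OF h bij_betw_trans[OF that h']] by (simp add: comp_assoc)
    then show "\<psi> ` Bij T \<subseteq> Bij S"
      by (auto simp: \<psi>_def Bij_def)
  qed
  moreover have "\<phi> (compose S f g) = compose T (\<phi> f) (\<phi> g)" if "g \<in> Bij S" for f g
    using h_mem h'_mem h'_h Bij_mem[OF that] by (auto simp: \<phi>_def compose_def fun_eq_iff)
  ultimately have "\<phi> \<in> iso (BijGroup S) (BijGroup T)"
    by (auto simp: iso_def hom_def BijGroup_def bij_betw_def)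
  then show ?thesis
    by (rule is_isoI)
qed

lemma BijGroup_atLeastAtMost_iso_sym_group: "BijGroup {1..n} \<cong> sym_group n"
proof -
  define \<phi> where "\<phi> f = (\<lambda>k. if k \<in> {1..n} then f k else k)" for f :: "nat \<Rightarrow> nat"
  have \<phi>_permutes: "\<phi> f permutes {1..n}" if "f \<in> Bij {1..n}" for f
  proof (rule bij_imp_permutes)
    have "bij_betw f {1..n} {1..n}"
      using that by (simp add: Bij_def)
    moreover have "\<phi> f k = f k" if "k \<in> {1..n}" for k
      using that by (simp add: \<phi>_def)
    ultimately show "bij_betw (\<phi> f) {1..n} {1..n}"
      using bij_betw_cong by blast
  qed (auto simp: \<phi>_def)
  have "bij_betw \<phi> (Bij {1..n}) {p. p permutes {1..n}}"
  proof (rule bij_betw_byWitness[where f' = "\<lambda>p. restrict p {1..n}"])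
    show "\<forall>f\<in>Bij {1..n}. restrict (\<phi> f) {1..n} = f"
      by (auto simp: \<phi>_def Bij_def extensional_def fun_eq_iff)
    show "\<forall>p\<in>{p. p permutes {1..n}}. \<phi> (restrict p {1..n}) = p"
      by (auto simp: \<phi>_def fun_eq_iff permutes_not_in)
    show "\<phi> ` Bij {1..n} \<subseteq> {p. p permutes {1..n}}"
      using \<phi>_permutes by blast
    show "(\<lambda>p. restrict p {1..n}) ` {p. p permutes {1..n}} \<subseteq> Bij {1..n}"
      by (auto simp: Bij_def permutes_imp_bij)
  qed
  moreover have "\<phi> (compose {1..n} f g) = \<phi> f \<circ> \<phi> g" if "g \<in> Bij {1..n}" for f g
    using Bij_mem[OF that] by (auto simp: \<phi>_def compose_def fun_eq_iff)
  moreover have "carrier (sym_group n) = {p. p permutes {1..n}}"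
    by (auto simp: sym_group_carrier)
  ultimately have "\<phi> \<in> iso (BijGroup {1..n}) (sym_group n)"
    by (auto simp: iso_def hom_def BijGroup_def sym_group_mult bij_betw_def)
  then show ?thesis
    by (rule is_isoI)
qed

lemma BijGroup_iso_sym_group:
  assumes "finite T"
  shows "BijGroup T \<cong> sym_group (card T)"
proof -
  obtain h where "bij_betw h {1..card T} T"
    using ex_bij_betw_nat_finite_1[OF assms] by blast
  then have "bij_betw (inv_into {1..card T} h) T {1..card T}"
    by (rule bij_betw_inv_into)
  then have "BijGroup T \<cong> BijGroup {1..card T}"
    by (rule BijGroup_iso_BijGroup)
  also have "\<dots> \<cong> sym_group (card T)"
    by (rule BijGroup_atLeastAtMost_iso_sym_group)
  finally show ?thesis .
qed

section \<open>Automorphisms of a matched layered order\<close>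

text \<open>
  An abstraction of the orbit poset: \<open>t0\<close> and \<open>t1\<close> play the \<open>(4)\<close>- and \<open>(3,1)\<close>-orbits,
  \<open>P\<close>, \<open>Q\<close>, \<open>R\<close> the orbits of shapes \<open>(2,2)\<close>, \<open>(2,1,1)\<close>, \<open>(1,1,1,1)\<close>, and \<open>u\<close> sends a
  \<open>(2,1,1)\<close>-orbit to the \<open>(2,2)\<close>-orbit above it.
\<close>

locale matched_layers =
  fixes X :: "'a set" and le :: "'a \<Rightarrow> 'a \<Rightarrow> bool"
    and t0 t1 :: 'a and P Q R :: "'a set" and u :: "'a \<Rightarrow> 'a"
  assumes X_eq: "X = {t0, t1} \<union> P \<union> Q \<union> R"
    and t0_neq_t1: "t0 \<noteq> t1"
    and t0_notin: "t0 \<notin> P \<union> Q \<union> R" and t1_notin: "t1 \<notin> P \<union> Q \<union> R"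
    and disjoint: "P \<inter> Q = {}" "P \<inter> R = {}" "Q \<inter> R = {}"
    and bij_u: "bij_betw u Q P"
    and le_iff: "a \<in> X \<Longrightarrow> b \<in> X \<Longrightarrow> le a b \<longleftrightarrow>
       a = b \<or> b = t0 \<or> (b = t1 \<and> a \<noteq> t0) \<or> (a \<in> R \<and> b \<in> P \<union> Q) \<or> (a \<in> Q \<and> b \<in> P \<and> u a = b)"
begin

definition auts :: "('a \<Rightarrow> 'a) set" where
  "auts = {\<alpha> \<in> Bij X. (\<forall>a\<in>X. \<forall>b\<in>X. le (\<alpha> a) (\<alpha> b) \<longleftrightarrow> le a b)
      \<and> \<alpha> t0 = t0 \<and> \<alpha> t1 = t1 \<and> \<alpha> ` P = P \<and> \<alpha> ` Q = Q \<and> \<alpha> ` R = R}"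

lemma layers_subset: "t0 \<in> X" "t1 \<in> X" "P \<subseteq> X" "Q \<subseteq> X" "R \<subseteq> X"
  using X_eq by auto

lemma u_mem: "q \<in> Q \<Longrightarrow> u q \<in> P"
  using bij_u by (auto simp: bij_betw_def)

lemma le_iff_u:
  assumes "b \<in> Q" "a \<in> P"
  shows "le b a \<longleftrightarrow> u b = a"
proof -
  have "b \<in> X" "a \<in> X"
    using assms layers_subset by auto
  moreover have "b \<noteq> a" "a \<noteq> t0" "a \<noteq> t1" "b \<notin> R"
    using assms disjoint t0_notin t1_notin by auto
  ultimately show ?thesis
    using le_iff[of b a] assms by simp
qed

lemma ex1_le_below:
  assumes "a \<in> P"
  shows "\<exists>!b. b \<in> Q \<and> le b a"
proof (rule ex1I)
  have "a \<in> u ` Q"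
    using assms bij_u by (simp add: bij_betw_def)
  then show "inv_into Q u a \<in> Q \<and> le (inv_into Q u a) a"
    using assms le_iff_u by (simp add: inv_into_into f_inv_into_f)
  show "b = inv_into Q u a" if "b \<in> Q \<and> le b a" for b
    using that assms le_iff_u bij_u by (metis bij_betw_def inv_into_f_f)
qed

lemma ex1_le_above: "b \<in> Q \<Longrightarrow> \<exists>!a. a \<in> P \<and> le b a"
  using le_iff_u u_mem by blast

lemma auts_le_iff: "\<alpha> \<in> auts \<Longrightarrow> a \<in> X \<Longrightarrow> b \<in> X \<Longrightarrow> le (\<alpha> a) (\<alpha> b) \<longleftrightarrow> le a b"
  by (simp add: auts_def)

lemma auts_commute_u:
  assumes "\<alpha> \<in> auts" "q \<in> Q"
  shows "\<alpha> (u q) = u (\<alpha> q)"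
proof -
  have "le q (u q)"
    using assms(2) u_mem le_iff_u by blast
  moreover have "q \<in> X" "u q \<in> X"
    using assms(2) u_mem layers_subset by auto
  ultimately have "le (\<alpha> q) (\<alpha> (u q))"
    using assms(1) auts_le_iff by blast
  moreover have "\<alpha> q \<in> Q" "\<alpha> (u q) \<in> P"
    using assms u_mem by (auto simp: auts_def)
  ultimately show ?thesis
    using le_iff_u by metis
qed

lemma mem_autsI:
  assumes bij: "\<alpha> \<in> Bij X" and fixes_t: "\<alpha> t0 = t0" "\<alpha> t1 = t1"
    and stable: "\<alpha> ` P = P" "\<alpha> ` Q = Q" "\<alpha> ` R = R"
    and commute: "\<And>q. q \<in> Q \<Longrightarrow> \<alpha> (u q) = u (\<alpha> q)"
  shows "\<alpha> \<in> auts"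
proof -
  have inj: "inj_on \<alpha> X"
    using bij by (simp add: Bij_def bij_betw_def)
  have maps: "\<alpha> a \<in> X" if "a \<in> X" for a
    using bij that by (rule Bij_mem)
  have inj_eq_iff: "\<alpha> a = \<alpha> b \<longleftrightarrow> a = b" if "a \<in> X" "b \<in> X" for a b
    using inj that by (meson inj_onD)
  have stable_mem_iff: "\<alpha> a \<in> S \<longleftrightarrow> a \<in> S" if "a \<in> X" "S \<subseteq> X" "\<alpha> ` S = S" for a S
    using inj_on_image_mem_iff[OF inj that(1,2)] that(3) by simp
  have "le (\<alpha> a) (\<alpha> b) \<longleftrightarrow> le a b" if a: "a \<in> X" and b: "b \<in> X" for a b
  proof -
    have points: "\<alpha> b = t0 \<longleftrightarrow> b = t0" "\<alpha> b = t1 \<longleftrightarrow> b = t1" "\<alpha> a = t0 \<longleftrightarrow> a = t0"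
      using inj_eq_iff[OF b layers_subset(1)] inj_eq_iff[OF b layers_subset(2)]
        inj_eq_iff[OF a layers_subset(1)] fixes_t
      by simp_all
    have layers: "\<alpha> a \<in> Q \<longleftrightarrow> a \<in> Q" "\<alpha> a \<in> R \<longleftrightarrow> a \<in> R"
      "\<alpha> b \<in> P \<longleftrightarrow> b \<in> P" "\<alpha> b \<in> Q \<longleftrightarrow> b \<in> Q"
      using stable_mem_iff[OF a] stable_mem_iff[OF b] layers_subset stable by simp_all
    have matched: "(a \<in> Q \<and> b \<in> P \<and> u (\<alpha> a) = \<alpha> b) \<longleftrightarrow> (a \<in> Q \<and> b \<in> P \<and> u a = b)"
    proof (cases "a \<in> Q")
      case True
      then have "u a \<in> X"
        using u_mem layers_subset by auto
      with True show ?thesis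
        using commute[OF True, symmetric] inj_eq_iff[OF _ b] by simp
    qed simp
    show ?thesis
      unfolding le_iff[OF maps[OF a] maps[OF b]] le_iff[OF a b] Un_iff
      by (simp only: inj_eq_iff[OF a b] points layers matched)
  qed
  with assms show ?thesis
    by (simp add: auts_def)
qed

definition aut_of :: "('a \<Rightarrow> 'a) \<Rightarrow> ('a \<Rightarrow> 'a) \<Rightarrow> 'a \<Rightarrow> 'a" where
  "aut_of \<sigma> \<tau> x =
     (if x \<in> P then \<sigma> x else if x \<in> Q then inv_into Q u (\<sigma> (u x))
      else if x \<in> R then \<tau> x else if x \<in> X then x else undefined)"

lemma aut_of_mem_auts:
  assumes \<sigma>: "\<sigma> \<in> Bij P" and \<tau>: "\<tau> \<in> Bij R"
  shows "aut_of \<sigma> \<tau> \<in> auts"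
proof -
  let ?\<alpha> = "aut_of \<sigma> \<tau>"
  have on_P: "bij_betw ?\<alpha> P P"
    using \<sigma> bij_betw_cong[of P ?\<alpha> \<sigma>] by (simp add: Bij_def aut_of_def)
  have "bij_betw (inv_into Q u \<circ> (\<sigma> \<circ> u)) Q Q"
    using \<sigma> by (auto simp: Bij_def intro: bij_betw_trans bij_u bij_betw_inv_into)
  moreover have "?\<alpha> x = (inv_into Q u \<circ> (\<sigma> \<circ> u)) x" if "x \<in> Q" for x
    using that disjoint by (auto simp: aut_of_def)
  ultimately have on_Q: "bij_betw ?\<alpha> Q Q"
    using bij_betw_cong by blast
  have "?\<alpha> x = \<tau> x" if "x \<in> R" for x
    using that disjoint by (auto simp: aut_of_def)
  moreover have "bij_betw \<tau> R R"
    using \<tau> by (simp add: Bij_def)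
  ultimately have on_R: "bij_betw ?\<alpha> R R"
    using bij_betw_cong by blast
  have fixes_t: "?\<alpha> t0 = t0" "?\<alpha> t1 = t1"
    using t0_notin t1_notin layers_subset by (simp_all add: aut_of_def)
  then have on_t: "bij_betw ?\<alpha> {t0, t1} {t0, t1}"
    using t0_neq_t1 by (simp add: bij_betw_def)
  have "bij_betw ?\<alpha> ({t0, t1} \<union> P \<union> Q \<union> R) ({t0, t1} \<union> P \<union> Q \<union> R)"
    using t0_notin t1_notin disjoint
    by (intro bij_betw_combine on_t on_P on_Q on_R) auto
  then have "bij_betw ?\<alpha> X X"
    by (simp only: X_eq[symmetric])
  moreover have "?\<alpha> \<in> extensional X"
    using layers_subset by (auto simp: aut_of_def extensional_def)
  ultimately have "?\<alpha> \<in> Bij X"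
    by (simp add: Bij_def)
  moreover have "?\<alpha> (u q) = u (?\<alpha> q)" if "q \<in> Q" for q
  proof -
    have "\<sigma> (u q) \<in> u ` Q"
      using that u_mem \<sigma> bij_u by (auto simp: Bij_def bij_betw_def)
    with that u_mem disjoint show ?thesis
      by (auto simp: aut_of_def f_inv_into_f)
  qed
  moreover have "?\<alpha> ` P = P" "?\<alpha> ` Q = Q" "?\<alpha> ` R = R"
    using on_P on_Q on_R by (simp_all add: bij_betw_def)
  ultimately show ?thesis
    using fixes_t by (intro mem_autsI)
qed

lemma restrict_aut_of:
  assumes "\<sigma> \<in> Bij P" "\<tau> \<in> Bij R"
  shows "restrict (aut_of \<sigma> \<tau>) P = \<sigma>" "restrict (aut_of \<sigma> \<tau>) R = \<tau>"
proof -
  have "x \<notin> P \<Longrightarrow> \<sigma> x = undefined" "x \<notin> R \<Longrightarrow> \<tau> x = undefined" for x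
    using assms by (simp_all add: Bij_def extensional_def)
  with disjoint show "restrict (aut_of \<sigma> \<tau>) P = \<sigma>" "restrict (aut_of \<sigma> \<tau>) R = \<tau>"
    by (force simp: aut_of_def fun_eq_iff)+
qed

lemma auts_eqI:
  assumes \<alpha>: "\<alpha> \<in> auts" and \<beta>: "\<beta> \<in> auts"
    and on_P: "\<And>x. x \<in> P \<Longrightarrow> \<alpha> x = \<beta> x" and on_R: "\<And>x. x \<in> R \<Longrightarrow> \<alpha> x = \<beta> x"
  shows "\<alpha> = \<beta>"
proof
  fix x
  consider "x \<notin> X" | "x = t0" | "x = t1" | "x \<in> P" | "x \<in> Q" | "x \<in> R"
    using X_eq by blast
  then show "\<alpha> x = \<beta> x"
  proof cases
    case 1
    with \<alpha> \<beta> show ?thesis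
      by (simp add: auts_def Bij_def extensional_def)
  next
    case 5
    then have "u (\<alpha> x) = u (\<beta> x)"
      using auts_commute_u[OF \<alpha>] auts_commute_u[OF \<beta>] on_P u_mem by metis
    moreover have "\<alpha> x \<in> Q" "\<beta> x \<in> Q"
      using 5 \<alpha> \<beta> by (auto simp: auts_def)
    ultimately show ?thesis
      using bij_u by (metis bij_betw_def inj_onD)
  qed (use \<alpha> \<beta> on_P on_R in \<open>simp_all add: auts_def\<close>)
qed

lemma restrict_auts_mem_Bij:
  assumes "\<alpha> \<in> auts"
  shows "restrict \<alpha> P \<in> Bij P" "restrict \<alpha> R \<in> Bij R"
  using assms layers_subset by (auto simp: auts_def intro!: restrict_mem_Bij)

theorem restrict_auts_iso:
  "(\<lambda>\<alpha>. (restrict \<alpha> P, restrict \<alpha> R))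
     \<in> iso (BijGroup X\<lparr>carrier := auts\<rparr>) (BijGroup P \<times>\<times> BijGroup R)"
  (is "?res \<in> iso ?Aut _")
proof (rule isoI)
  show "?res \<in> hom ?Aut (BijGroup P \<times>\<times> BijGroup R)"
  proof (rule homI)
    fix \<alpha> \<beta> assume "\<alpha> \<in> carrier ?Aut" "\<beta> \<in> carrier ?Aut"
    then have \<alpha>: "\<alpha> \<in> auts" and \<beta>: "\<beta> \<in> auts"
      by simp_all
    then have "\<alpha> \<in> Bij X" "\<beta> \<in> Bij X" "\<beta> ` P = P" "\<beta> ` R = R"
      by (simp_all add: auts_def)
    with layers_subset show "?res (\<alpha> \<otimes>\<^bsub>?Aut\<^esub> \<beta>) = ?res \<alpha> \<otimes>\<^bsub>BijGroup P \<times>\<times> BijGroup R\<^esub> ?res \<beta>"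
      using restrict_auts_mem_Bij[OF \<alpha>] restrict_auts_mem_Bij[OF \<beta>]
      by (simp add: BijGroup_def restrict_compose)
  qed (simp add: restrict_auts_mem_Bij BijGroup_def)
  have "inj_on ?res auts"
  proof (rule inj_onI)
    fix \<alpha> \<beta> assume \<alpha>: "\<alpha> \<in> auts" and \<beta>: "\<beta> \<in> auts" and eq: "?res \<alpha> = ?res \<beta>"
    show "\<alpha> = \<beta>"
    proof (rule auts_eqI[OF \<alpha> \<beta>])
      show "\<alpha> x = \<beta> x" if "x \<in> P" for x
        using eq that by (metis prod.inject restrict_apply')
      show "\<alpha> x = \<beta> x" if "x \<in> R" for x
        using eq that by (metis prod.inject restrict_apply')
    qed
  qed
  moreover have "?res ` auts = Bij P \<times> Bij R"
  proof
    show "?res ` auts \<subseteq> Bij P \<times> Bij R"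
      using restrict_auts_mem_Bij by auto
    show "Bij P \<times> Bij R \<subseteq> ?res ` auts"
    proof clarify
      fix \<sigma> \<tau> assume "\<sigma> \<in> Bij P" "\<tau> \<in> Bij R"
      then show "(\<sigma>, \<tau>) \<in> ?res ` auts"
        by (intro image_eqI[where x = "aut_of \<sigma> \<tau>"]) (simp_all add: restrict_aut_of aut_of_mem_auts)
    qed
  qed
  ultimately show "bij_betw ?res (carrier ?Aut) (carrier (BijGroup P \<times>\<times> BijGroup R))"
    by (simp add: bij_betw_def BijGroup_def)
qed

end

section \<open>The Klein four-group acting on tabloids of size 4\<close>

lemma Klein4_products:
  fixes a b c :: "nat \<Rightarrow> nat"
  defines "a \<equiv> transpose 1 2 \<circ> transpose 3 4" and "b \<equiv> transpose 1 3 \<circ> transpose 2 4"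
    and "c \<equiv> transpose 1 4 \<circ> transpose 2 3"
  shows "a \<circ> a = id" "b \<circ> b = id" "c \<circ> c = id" "a \<circ> b = c" "b \<circ> a = c"
    "a \<circ> c = b" "c \<circ> a = b" "b \<circ> c = a" "c \<circ> b = a"
  unfolding a_def b_def c_def by (simp_all add: fun_eq_iff transpose_def)

interpretation Klein4: transformation_group Klein4
proof
  show "id \<in> Klein4"
    by (simp add: Klein4_def)
  show "g \<circ> h \<in> Klein4" if "g \<in> Klein4" "h \<in> Klein4" for g h
    using that unfolding Klein4_def
    by (elim insertE emptyE) (simp_all only: Klein4_products id_comp comp_id insert_iff simp_thms)
  show "\<exists>h\<in>Klein4. h \<circ> g = id" if "g \<in> Klein4" for g
    using that unfolding Klein4_def
    by (elim insertE emptyE) (simp_all only: Klein4_products id_comp bex_simps insert_iff simp_thms)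
qed

lemma length_le_sum_list: "(\<forall>x\<in>set l. 0 < x) \<Longrightarrow> length l \<le> sum_list (l :: nat list)"
  by (induction l) auto

lemma partitions_4: "partitions 4 = {[4], [3,1], [2,2], [2,1,1], [1,1,1,1]}"
proof (rule Set.set_eqI, rule iffI)
  fix l assume "l \<in> partitions 4"
  then have sorted: "sorted_wrt (\<ge>) l" and pos: "\<forall>x\<in>set l. 0 < x" and sum: "sum_list l = 4"
    by (simp_all add: partitions_def)
  have "length l \<le> 4"
    using length_le_sum_list[OF pos] sum by simp
  then consider "l = []" | a where "l = [a]" | a b where "l = [a, b]" | a b c where "l = [a, b, c]"
    | a b c e where "l = [a, b, c, e]"
    by (auto simp: le_Suc_eq numeral_eq_Suc length_Suc_conv)
  then show "l \<in> {[4], [3,1], [2,2], [2,1,1], [1,1,1,1]}"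
    using sorted pos sum by cases auto
qed (auto simp: partitions_def)

lemma subset_1_4_card_cases:
  fixes S :: "nat set"
  assumes "S \<subseteq> {1..4}"
  shows "card S = 1 \<Longrightarrow> S \<in> {{1}, {2}, {3}, {4}}"
    and "card S = 2 \<Longrightarrow> S \<in> {{1,2}, {1,3}, {1,4}, {2,3}, {2,4}, {3,4}}"
    and "card S = 3 \<Longrightarrow> S \<in> {{1,2,3}, {1,2,4}, {1,3,4}, {2,3,4}}"
    and "card S = 4 \<Longrightarrow> S = {1,2,3,4}"
proof -
  have "S \<in> Pow {1,2,3,4}"
    using assms by auto
  then have "S \<in> {{}, {1}, {2}, {3}, {4}, {1,2}, {1,3}, {1,4}, {2,3}, {2,4}, {3,4},
      {1,2,3}, {1,2,4}, {1,3,4}, {2,3,4}, {1,2,3,4}}"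
    by (simp add: Pow_insert insert_commute)
  then show "card S = 1 \<Longrightarrow> S \<in> {{1}, {2}, {3}, {4}}"
    and "card S = 2 \<Longrightarrow> S \<in> {{1,2}, {1,3}, {1,4}, {2,3}, {2,4}, {3,4}}"
    and "card S = 3 \<Longrightarrow> S \<in> {{1,2,3}, {1,2,4}, {1,3,4}, {2,3,4}}"
    and "card S = 4 \<Longrightarrow> S = {1,2,3,4}"
    by (elim insertE emptyE; simp)+
qed

definition reps_2_2 :: "nat set list set" where
  "reps_2_2 = {[{1,2},{3,4}], [{1,3},{2,4}], [{1,4},{2,3}]}"

definition reps_2_1_1 :: "nat set list set" where
  "reps_2_1_1 = {[{1,2},{3},{4}], [{1,3},{2},{4}], [{1,4},{2},{3}]}"

text \<open>
  Since \<open>Klein4\<close> acts simply transitively on \<open>{1,...,4}\<close>, each \<open>(1,1,1,1)\<close>-orbit contains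
  exactly one tabloid whose first row is \<open>{1}\<close>.
\<close>

definition reps_1_1_1_1 :: "nat set list set" where
  "reps_1_1_1_1 = {[{1},{2},{3},{4}], [{1},{2},{4},{3}], [{1},{3},{2},{4}],
     [{1},{3},{4},{2}], [{1},{4},{2},{3}], [{1},{4},{3},{2}]}"

definition Klein4_reps :: "nat set list set" where
  "Klein4_reps = {[{1,2,3,4}], [{1,2,3},{4}]} \<union> reps_2_2 \<union> reps_2_1_1 \<union> reps_1_1_1_1"

text \<open>\<open>insert_commute\<close> sorts set literals, so that equal finite sets become syntactically equal.\<close>

lemmas Klein4_orbit_simps = tab_orbit_def Klein4_def tab_act_def transpose_def insert_commute

lemma orbits_shape_4: "orbits_shape 4 Klein4 [4] = {tab_orbit Klein4 [{1,2,3,4}]}"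
proof -
  have "orbits_shape 4 Klein4 [4] = tab_orbit Klein4 ` {[{1,2,3,4}]}"
  proof (rule Klein4.orbits_shape_eq_image)
    fix A assume "A \<in> tabloids 4 [4]"
    then obtain a where "A = [a]" "a \<subseteq> {1..4}" "card a = 4"
      by (auto simp: tabloids_Cons tabloids_Nil)
    then show "\<exists>R\<in>{[{1,2,3,4}]}. A \<in> tab_orbit Klein4 R"
      using subset_1_4_card_cases(4) Klein4.self_mem_tab_orbit by simp
  qed (auto simp: tabloids_Cons tabloids_Nil)
  then show ?thesis
    by simp
qed

lemma orbits_shape_3_1: "orbits_shape 4 Klein4 [3,1] = {tab_orbit Klein4 [{1,2,3},{4}]}"
proof -
  have "orbits_shape 4 Klein4 [3,1] = tab_orbit Klein4 ` {[{1,2,3},{4}]}"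
  proof (rule Klein4.orbits_shape_eq_image)
    fix A assume "A \<in> tabloids 4 [3,1]"
    then obtain a b where A: "A = [a, b]" and a: "a \<subseteq> {1..4}" "card a = 3"
      and b: "b \<subseteq> {1..4}" "card b = 1" and disjoint: "a \<inter> b = {}"
      by (auto simp: tabloids_Cons tabloids_Nil)
    from subset_1_4_card_cases(3)[OF a] subset_1_4_card_cases(1)[OF b]
    show "\<exists>R\<in>{[{1,2,3},{4}]}. A \<in> tab_orbit Klein4 R"
      using disjoint unfolding A by (elim insertE emptyE) (simp_all add: Klein4_orbit_simps)
  qed (auto simp: tabloids_Cons tabloids_Nil)
  then show ?thesis
    by simp
qed

lemma orbits_shape_2_2: "orbits_shape 4 Klein4 [2,2] = tab_orbit Klein4 ` reps_2_2"
proof (rule Klein4.orbits_shape_eq_image)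
  fix A assume "A \<in> tabloids 4 [2,2]"
  then obtain a b where A: "A = [a, b]" and a: "a \<subseteq> {1..4}" "card a = 2"
    and b: "b \<subseteq> {1..4}" "card b = 2" and disjoint: "a \<inter> b = {}"
    by (auto simp: tabloids_Cons tabloids_Nil)
  from subset_1_4_card_cases(2)[OF a] subset_1_4_card_cases(2)[OF b]
  show "\<exists>R\<in>reps_2_2. A \<in> tab_orbit Klein4 R"
    using disjoint unfolding A reps_2_2_def
    by (elim insertE emptyE) (simp_all add: Klein4_orbit_simps)
qed (auto simp: reps_2_2_def tabloids_Cons tabloids_Nil)

lemma orbits_shape_2_1_1: "orbits_shape 4 Klein4 [2,1,1] = tab_orbit Klein4 ` reps_2_1_1"
proof (rule Klein4.orbits_shape_eq_image)
  fix A assume "A \<in> tabloids 4 [2,1,1]"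
  then obtain a b c where A: "A = [a, b, c]" and a: "a \<subseteq> {1..4}" "card a = 2"
    and b: "b \<subseteq> {1..4}" "card b = 1" and c: "c \<subseteq> {1..4}" "card c = 1"
    and disjoint: "a \<inter> (b \<union> c) = {}" "b \<inter> c = {}"
    by (auto simp: tabloids_Cons tabloids_Nil)
  from subset_1_4_card_cases(2)[OF a] subset_1_4_card_cases(1)[OF b] subset_1_4_card_cases(1)[OF c]
  show "\<exists>R\<in>reps_2_1_1. A \<in> tab_orbit Klein4 R"
    using disjoint unfolding A reps_2_1_1_def
    by (elim insertE emptyE) (simp_all add: Klein4_orbit_simps)
qed (auto simp: reps_2_1_1_def tabloids_Cons tabloids_Nil)

lemma orbits_shape_1_1_1_1: "orbits_shape 4 Klein4 [1,1,1,1] = tab_orbit Klein4 ` reps_1_1_1_1"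
proof (rule Klein4.orbits_shape_eq_image)
  fix A assume "A \<in> tabloids 4 [1,1,1,1]"
  then obtain a b c e where A: "A = [a, b, c, e]" and a: "a \<subseteq> {1..4}" "card a = 1"
    and b: "b \<subseteq> {1..4}" "card b = 1" and c: "c \<subseteq> {1..4}" "card c = 1"
    and e: "e \<subseteq> {1..4}" "card e = 1"
    and disjoint: "a \<inter> (b \<union> (c \<union> e)) = {}" "b \<inter> (c \<union> e) = {}" "c \<inter> e = {}"
    by (auto simp: tabloids_Cons tabloids_Nil)
  from subset_1_4_card_cases(1)[OF a] subset_1_4_card_cases(1)[OF b]
    subset_1_4_card_cases(1)[OF c] subset_1_4_card_cases(1)[OF e]
  show "\<exists>R\<in>reps_1_1_1_1. A \<in> tab_orbit Klein4 R"
    using disjoint unfolding A reps_1_1_1_1_def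
    by (elim insertE emptyE) (simp_all add: Klein4_orbit_simps)
qed (auto simp: reps_1_1_1_1_def tabloids_Cons tabloids_Nil)

lemma inj_on_tab_orbit_Klein4_reps: "inj_on (tab_orbit Klein4) Klein4_reps"
proof (rule inj_onI)
  fix R S assume R: "R \<in> Klein4_reps" and S: "S \<in> Klein4_reps"
    and "tab_orbit Klein4 R = tab_orbit Klein4 S"
  then have "R \<in> tab_orbit Klein4 S"
    using Klein4.self_mem_tab_orbit by metis
  \<comment> \<open>\<open>set_eq_subset\<close> refutes equations between distinct set literals; with \<open>subset_empty\<close> it loops.\<close>
  with R S show "R = S"
    unfolding Klein4_reps_def reps_2_2_def reps_2_1_1_def reps_1_1_1_1_def
    by (elim UnE insertE emptyE) (simp_all add: Klein4_orbit_simps set_eq_subset del: subset_empty)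
qed

lemma tab_le_Klein4_reps_iff:
  assumes "R \<in> Klein4_reps" and "S \<in> Klein4_reps"
  shows "(\<exists>g\<in>Klein4. tab_le R (tab_act g S)) \<longleftrightarrow>
    R = S \<or> S = [{1,2,3,4}] \<or> (S = [{1,2,3},{4}] \<and> R \<noteq> [{1,2,3,4}])
    \<or> (R \<in> reps_1_1_1_1 \<and> S \<in> reps_2_2 \<union> reps_2_1_1)
    \<or> (R \<in> reps_2_1_1 \<and> S = merge_tail_rows R)"
proof -
  have "{1..4::nat} = {1,2,3,4}"
    by auto
  note tab_le_iff = tab_le_iff_prefixes_upto[where n = 4, unfolded this]
  from assms show ?thesis
    unfolding Klein4_reps_def reps_2_2_def reps_2_1_1_def reps_1_1_1_1_def
    by (elim UnE insertE emptyE)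
      (simp_all add: tab_le_iff Klein4_orbit_simps merge_tail_rows_def set_eq_subset del: subset_empty)
qed

lemma Klein4_reps_subsets:
  "[{1,2,3,4}] \<in> Klein4_reps" "[{1,2,3},{4}] \<in> Klein4_reps"
  "reps_2_2 \<subseteq> Klein4_reps" "reps_2_1_1 \<subseteq> Klein4_reps" "reps_1_1_1_1 \<subseteq> Klein4_reps"
  by (auto simp: Klein4_reps_def)

lemma Klein4_reps_disjoint:
  "[{1,2,3,4}] \<noteq> [{1,2,3},{4}]"
  "[{1,2,3,4}] \<notin> reps_2_2 \<union> reps_2_1_1 \<union> reps_1_1_1_1"
  "[{1,2,3},{4}] \<notin> reps_2_2 \<union> reps_2_1_1 \<union> reps_1_1_1_1"
  "reps_2_2 \<inter> reps_2_1_1 = {}" "reps_2_2 \<inter> reps_1_1_1_1 = {}" "reps_2_1_1 \<inter> reps_1_1_1_1 = {}"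
  by (auto simp: reps_2_2_def reps_2_1_1_def reps_1_1_1_1_def)

lemma orbits_Klein4:
  "orbits 4 Klein4 = {tab_orbit Klein4 [{1,2,3,4}], tab_orbit Klein4 [{1,2,3},{4}]}
     \<union> orbits_shape 4 Klein4 [2,2] \<union> orbits_shape 4 Klein4 [2,1,1] \<union> orbits_shape 4 Klein4 [1,1,1,1]"
  \<comment> \<open>The shape lemmas must be used before \<open>simp\<close> rewrites \<open>1\<close> to \<open>Suc 0\<close> (\<open>One_nat_def\<close>).\<close>
  unfolding orbits_def partitions_4 UN_insert UN_empty orbits_shape_4 orbits_shape_3_1 by auto

lemma merge_tail_rows_reps_2_1_1: "bij_betw merge_tail_rows reps_2_1_1 reps_2_2"
  by (simp add: bij_betw_def reps_2_1_1_def reps_2_2_def merge_tail_rows_def insert_commute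
      set_eq_subset del: subset_empty)

lemma orbits_Klein4_eq_image: "orbits 4 Klein4 = tab_orbit Klein4 ` Klein4_reps"
  unfolding orbits_Klein4 orbits_shape_2_2 orbits_shape_2_1_1 orbits_shape_1_1_1_1 Klein4_reps_def
  by auto

lemma tab_orbit_Klein4_eq_iff:
  "R \<in> Klein4_reps \<Longrightarrow> S \<in> Klein4_reps \<Longrightarrow> tab_orbit Klein4 R = tab_orbit Klein4 S \<longleftrightarrow> R = S"
  using inj_on_tab_orbit_Klein4_reps by (rule inj_on_eq_iff)

lemma tab_orbit_Klein4_mem_image_iff:
  "R \<in> Klein4_reps \<Longrightarrow> Rs \<subseteq> Klein4_reps \<Longrightarrow>
     tab_orbit Klein4 R \<in> tab_orbit Klein4 ` Rs \<longleftrightarrow> R \<in> Rs"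
  using inj_on_tab_orbit_Klein4_reps by (rule inj_on_image_mem_iff)

lemma bij_betw_merge_tail_rows_orbits:
  "bij_betw ((`) merge_tail_rows) (orbits_shape 4 Klein4 [2,1,1]) (orbits_shape 4 Klein4 [2,2])"
proof -
  have bij_orb: "bij_betw (tab_orbit Klein4) Rs (tab_orbit Klein4 ` Rs)" if "Rs \<subseteq> Klein4_reps" for Rs
    using inj_on_subset[OF inj_on_tab_orbit_Klein4_reps that] by (simp add: bij_betw_def)
  have "bij_betw (tab_orbit Klein4 \<circ> merge_tail_rows) reps_2_1_1 (orbits_shape 4 Klein4 [2,2])"
    using merge_tail_rows_reps_2_1_1 bij_orb Klein4_reps_subsets
    by (auto simp: orbits_shape_2_2 intro: bij_betw_trans)
  moreover have "tab_orbit Klein4 \<circ> merge_tail_rows = (`) merge_tail_rows \<circ> tab_orbit Klein4"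
    by (simp add: fun_eq_iff image_merge_tail_rows_tab_orbit)
  ultimately show ?thesis
    using bij_betw_comp_iff bij_orb[of reps_2_1_1] Klein4_reps_subsets
    by (metis orbits_shape_2_1_1)
qed

lemma orbit_le_Klein4_iff:
  assumes "a \<in> orbits 4 Klein4" and "b \<in> orbits 4 Klein4"
  shows "orbit_le a b \<longleftrightarrow>
    a = b \<or> b = tab_orbit Klein4 [{1,2,3,4}]
    \<or> (b = tab_orbit Klein4 [{1,2,3},{4}] \<and> a \<noteq> tab_orbit Klein4 [{1,2,3,4}])
    \<or> (a \<in> orbits_shape 4 Klein4 [1,1,1,1] \<and> b \<in> orbits_shape 4 Klein4 [2,2] \<union> orbits_shape 4 Klein4 [2,1,1])
    \<or> (a \<in> orbits_shape 4 Klein4 [2,1,1] \<and> b \<in> orbits_shape 4 Klein4 [2,2] \<and> merge_tail_rows ` a = b)"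
proof -
  note shapes = orbits_shape_2_2 orbits_shape_2_1_1 orbits_shape_1_1_1_1
  obtain R S where R: "R \<in> Klein4_reps" "a = tab_orbit Klein4 R"
    and S: "S \<in> Klein4_reps" "b = tab_orbit Klein4 S"
    using assms unfolding orbits_Klein4_eq_image by blast
  have "merge_tail_rows R \<in> reps_2_2" if "R \<in> reps_2_1_1"
    using merge_tail_rows_reps_2_1_1 that by (meson bij_betwE)
  then have matched: "(a \<in> orbits_shape 4 Klein4 [2,1,1] \<and> b \<in> orbits_shape 4 Klein4 [2,2]
      \<and> merge_tail_rows ` a = b) \<longleftrightarrow> (R \<in> reps_2_1_1 \<and> S = merge_tail_rows R)"
    unfolding shapes R(2) S(2) using R(1) S(1) Klein4_reps_subsets
    by (auto simp: tab_orbit_Klein4_mem_image_iff tab_orbit_Klein4_eq_iff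
        image_merge_tail_rows_tab_orbit)
  show ?thesis
    unfolding matched
    unfolding R(2) S(2) Klein4.orbit_le_tab_orbit_iff tab_le_Klein4_reps_iff[OF R(1) S(1)] shapes using R(1) S(1) Klein4_reps_subsets
    by (simp add: tab_orbit_Klein4_mem_image_iff tab_orbit_Klein4_eq_iff)
qed

interpretation Klein4_orbits: matched_layers "orbits 4 Klein4" orbit_le
  "tab_orbit Klein4 [{1,2,3,4}]" "tab_orbit Klein4 [{1,2,3},{4}]"
  "orbits_shape 4 Klein4 [2,2]" "orbits_shape 4 Klein4 [2,1,1]" "orbits_shape 4 Klein4 [1,1,1,1]"
  "(`) merge_tail_rows"
proof
  note shapes = orbits_shape_2_2 orbits_shape_2_1_1 orbits_shape_1_1_1_1
  show "tab_orbit Klein4 [{1,2,3,4}] \<noteq> tab_orbit Klein4 [{1,2,3},{4}]"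
    using Klein4_reps_subsets Klein4_reps_disjoint by (simp add: tab_orbit_Klein4_eq_iff)
  show "tab_orbit Klein4 [{1,2,3,4}] \<notin> orbits_shape 4 Klein4 [2,2] \<union> orbits_shape 4 Klein4 [2,1,1]
      \<union> orbits_shape 4 Klein4 [1,1,1,1]"
    "tab_orbit Klein4 [{1,2,3},{4}] \<notin> orbits_shape 4 Klein4 [2,2] \<union> orbits_shape 4 Klein4 [2,1,1]
      \<union> orbits_shape 4 Klein4 [1,1,1,1]"
    unfolding shapes image_Un[symmetric] using Klein4_reps_subsets Klein4_reps_disjoint
    by (simp_all add: tab_orbit_Klein4_mem_image_iff)
  show "orbits_shape 4 Klein4 [2,2] \<inter> orbits_shape 4 Klein4 [2,1,1] = {}"
    "orbits_shape 4 Klein4 [2,2] \<inter> orbits_shape 4 Klein4 [1,1,1,1] = {}"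
    "orbits_shape 4 Klein4 [2,1,1] \<inter> orbits_shape 4 Klein4 [1,1,1,1] = {}"
    unfolding shapes using Klein4_reps_subsets Klein4_reps_disjoint
    by (simp_all add: inj_on_image_Int[OF inj_on_tab_orbit_Klein4_reps, symmetric])
qed (fact orbits_Klein4 bij_betw_merge_tail_rows_orbits orbit_le_Klein4_iff)+

lemma Aut0_set_Klein4: "Aut0_set 4 Klein4 = Klein4_orbits.auts"
  unfolding Aut0_set_def Klein4_orbits.auts_def partitions_4 ball_simps
    orbits_shape_4 orbits_shape_3_1
  by auto

lemma Aut0_Klein4: "Aut0 4 Klein4 = BijGroup (orbits 4 Klein4)\<lparr>carrier := Klein4_orbits.auts\<rparr>"
  by (simp add: Aut0_def Aut0_set_Klein4)

lemma card_orbits_shape_Klein4: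
  "card (orbits_shape 4 Klein4 [2,2]) = 3" "card (orbits_shape 4 Klein4 [2,1,1]) = 3"
  "card (orbits_shape 4 Klein4 [1,1,1,1]) = 6"
proof -
  have "card (tab_orbit Klein4 ` Rs) = card Rs" if "Rs \<subseteq> Klein4_reps" for Rs
    using inj_on_subset[OF inj_on_tab_orbit_Klein4_reps that] by (rule card_image)
  moreover have "card reps_2_2 = 3" "card reps_2_1_1 = 3" "card reps_1_1_1_1 = 6"
    by (simp_all add: reps_2_2_def reps_2_1_1_def reps_1_1_1_1_def doubleton_eq_iff)
  ultimately show "card (orbits_shape 4 Klein4 [2,2]) = 3" "card (orbits_shape 4 Klein4 [2,1,1]) = 3"
    "card (orbits_shape 4 Klein4 [1,1,1,1]) = 6"
    unfolding orbits_shape_2_2 orbits_shape_2_1_1 orbits_shape_1_1_1_1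
    using Klein4_reps_subsets by simp_all
qed

theorem theorem10p1p1:
  shows "(Aut0 4 Klein4 \<cong> DirProd (sym_group 3) (sym_group 6))
    \<and> (card (orbits_shape 4 Klein4 [4]) = 1)
    \<and> (card (orbits_shape 4 Klein4 [3,1]) = 1)
    \<and> (card (orbits_shape 4 Klein4 [2,2]) = 3)
    \<and> (card (orbits_shape 4 Klein4 [2,1,1]) = 3)
    \<and> (card (orbits_shape 4 Klein4 [1,1,1,1]) = 6)
    \<and> (\<forall>a\<in>orbits_shape 4 Klein4 [2,2]. \<exists>!b. b \<in> orbits_shape 4 Klein4 [2,1,1] \<and> orbit_le b a)
    \<and> (\<forall>b\<in>orbits_shape 4 Klein4 [2,1,1]. \<exists>!a. a \<in> orbits_shape 4 Klein4 [2,2] \<and> orbit_le b a)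
    \<and> (\<forall>\<alpha>\<in>Aut0_set 4 Klein4. \<forall>a\<in>orbits_shape 4 Klein4 [2,2]. \<forall>b\<in>orbits_shape 4 Klein4 [2,1,1].
           (orbit_le b a \<longleftrightarrow> orbit_le (\<alpha> b) (\<alpha> a)))
    \<and> ((\<lambda>\<alpha>. (restrict \<alpha> (orbits_shape 4 Klein4 [2,2]), restrict \<alpha> (orbits_shape 4 Klein4 [1,1,1,1])))
           \<in> iso (Aut0 4 Klein4)
                 (DirProd (BijGroup (orbits_shape 4 Klein4 [2,2])) (BijGroup (orbits_shape 4 Klein4 [1,1,1,1]))))"
proof -
  let ?P = "orbits_shape 4 Klein4 [2,2]" and ?R = "orbits_shape 4 Klein4 [1,1,1,1]"
  have iso: "(\<lambda>\<alpha>. (restrict \<alpha> ?P, restrict \<alpha> ?R)) \<in> iso (Aut0 4 Klein4) (BijGroup ?P \<times>\<times> BijGroup ?R)"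
    unfolding Aut0_Klein4 by (rule Klein4_orbits.restrict_auts_iso)
  have "finite ?P" "finite ?R"
    using card_orbits_shape_Klein4 card.infinite by fastforce+
  then have "BijGroup ?P \<times>\<times> BijGroup ?R \<cong> sym_group 3 \<times>\<times> sym_group 6"
    using group.DirProd_iso_trans[OF group_BijGroup] BijGroup_iso_sym_group card_orbits_shape_Klein4
    by metis
  with iso have "Aut0 4 Klein4 \<cong> sym_group 3 \<times>\<times> sym_group 6"
    using is_isoI iso_trans by blast
  moreover have "\<forall>\<alpha>\<in>Aut0_set 4 Klein4. \<forall>a\<in>?P. \<forall>b\<in>orbits_shape 4 Klein4 [2,1,1].
      orbit_le b a \<longleftrightarrow> orbit_le (\<alpha> b) (\<alpha> a)"
    unfolding Aut0_set_Klein4 using Klein4_orbits.auts_le_iff Klein4_orbits.layers_subset by blast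
  ultimately show ?thesis
    using iso card_orbits_shape_Klein4 Klein4_orbits.ex1_le_below Klein4_orbits.ex1_le_above
    unfolding orbits_shape_4 orbits_shape_3_1 by (intro conjI) auto
qed

end
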